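(* For all $n\ge0$, \[ p_n^2=p_n+2\sum_{k=0}^{n-5}\sum_{r=5}^{n-k}c_{r-5}p_k p_{n-k-r}^2 . \]
   Context: The Narayana's cows numbers $c_n$ are defined by $c_n=\delta_{n,0}+c_{n-1}+c_{n-3}$ for $n\ge0$, $c_n=0$ for $n<0$. The Padovan numbers $p_n$ are defined by $p_n=\delta_{n,0}+p_{n-2}+p_{n-3}$ for $n\ge0$, $p_n=0$ for $n<0$. $\delta_{i,j}$ is $1$ if $i=j$ and $0$ otherwise. Empty sums are $0$. *)

theory Defs
  imports Main
begin

fun cowN :: "nat \<Rightarrow> nat" where
  "cowN n = (if n = 0 then 1 else 0)
            + (if n \<ge> 1 then cowN (n - 1) else 0)
            + (if n \<ge> 3 then cowN (n - 3) else 0)"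

definition cow :: "int \<Rightarrow> int" where
  "cow n = (if n < 0 then 0 else int (cowN (nat n)))"

fun padN :: "nat \<Rightarrow> nat" where
  "padN n = (if n = 0 then 1 else 0)
            + (if n \<ge> 2 then padN (n - 2) else 0)
            + (if n \<ge> 3 then padN (n - 3) else 0)"

definition pad :: "int \<Rightarrow> int" where
  "pad n = (if n < 0 then 0 else int (padN (nat n)))"

end

theory Submission
  imports Defs "HOL-Computational_Algebra.Formal_Power_Series"
begin

text \<open>
  With \<open>P\<close>, \<open>C\<close>, \<open>Q\<close> the generating functions of \<open>p\<^sub>n\<close>, \<open>c\<^sub>n\<close> and \<open>p\<^sub>n\<^sup>2\<close>, the claim is the
  coefficient form of \<open>Q = P + 2 X\<^sup>5 P C Q\<close>. Squaring the Padovan recurrence gives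
  \<open>(1 - X\<^sup>2 - X\<^sup>3) Q = 1 + 2 X\<^sup>3 K\<close>, where \<open>K\<close> generates the products \<open>p\<^sub>n\<^sub>+\<^sub>1 p\<^sub>n\<close>; these
  products satisfy the cows recurrence up to the inhomogeneous term \<open>p\<^sub>n\<^sub>+\<^sub>1\<^sup>2\<close>, i.e.
  \<open>(1 - X - X\<^sup>3) K = X\<^sup>2 Q\<close>. Since \<open>P\<close> and \<open>C\<close> invert \<open>1 - X\<^sup>2 - X\<^sup>3\<close> and \<open>1 - X - X\<^sup>3\<close>,
  eliminating \<open>K\<close> yields the identity.
\<close>

unbundle fps_syntax

definition padovan :: "nat \<Rightarrow> int" where
  "padovan n = int (padN n)"

definition narayana :: "nat \<Rightarrow> int" where
  "narayana n = int (cowN n)"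

declare padN.simps [simp del] cowN.simps [simp del]

lemma pad_int [simp]: "pad (int n) = padovan n"
  by (simp add: pad_def padovan_def)

lemma cow_int [simp]: "cow (int n) = narayana n"
  by (simp add: cow_def narayana_def)

lemma padovan_plus_3: "padovan (n + 3) = padovan (n + 1) + padovan n"
  unfolding padovan_def by (subst padN.simps) simp

lemma padovan_small [simp]:
  "padovan 0 = 1" "padovan (Suc 0) = 0" "padovan 2 = 1" "padovan 3 = 1" "padovan 4 = 1"
  by (simp_all add: padovan_def padN.simps)

lemma padovan_square_small:
  assumes "n < 5"
  shows "padovan n ^ 2 = padovan n"
proof -
  have "n = 0 \<or> n = 1 \<or> n = 2 \<or> n = 3 \<or> n = 4"
    using assms by auto
  then show ?thesis
    by (elim disjE) simp_all
qed

lemma fps_one_minus_X_powers_mult_nth: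
  "((1 - fps_X ^ a - fps_X ^ b) * (F :: 'a :: comm_ring_1 fps)) $ n
     = F $ n - (if n < a then 0 else F $ (n - a)) - (if n < b then 0 else F $ (n - b))"
  by (simp only: left_diff_distrib mult_1_left fps_sub_nth fps_X_power_mult_nth)

definition padovan_fps :: "int fps" where
  "padovan_fps = Abs_fps padovan"

definition narayana_fps :: "int fps" where
  "narayana_fps = Abs_fps narayana"

definition padovan_square_fps :: "int fps" where
  "padovan_square_fps = Abs_fps (\<lambda>n. padovan n ^ 2)"

definition padovan_product_fps :: "int fps" where
  "padovan_product_fps = Abs_fps (\<lambda>n. padovan (n + 1) * padovan n)"

lemma padovan_fps_inverse: "(1 - fps_X ^ 2 - fps_X ^ 3) * padovan_fps = 1"
proof (rule fps_ext)
  fix n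
  show "((1 - fps_X ^ 2 - fps_X ^ 3) * padovan_fps) $ n = (1 :: int fps) $ n"
    unfolding fps_one_minus_X_powers_mult_nth padovan_fps_def padovan_def
    by (subst (1) padN.simps) (auto simp: not_less)
qed

lemma narayana_fps_inverse: "(1 - fps_X ^ 1 - fps_X ^ 3) * narayana_fps = 1"
proof (rule fps_ext)
  fix n
  show "((1 - fps_X ^ 1 - fps_X ^ 3) * narayana_fps) $ n = (1 :: int fps) $ n"
    unfolding fps_one_minus_X_powers_mult_nth narayana_fps_def narayana_def
    by (subst (1) cowN.simps) (auto simp: not_less)
qed

lemma padovan_square_plus_3:
  "padovan (n + 3) ^ 2 - padovan (n + 1) ^ 2 - padovan n ^ 2 = 2 * (padovan (n + 1) * padovan n)"
  by (simp add: padovan_plus_3 power2_eq_square algebra_simps)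

lemma padovan_product_plus_3:
  "padovan (n + 4) * padovan (n + 3) - padovan (n + 3) * padovan (n + 2)
     - padovan (n + 1) * padovan n = padovan (n + 1) ^ 2"
proof -
  have "padovan (n + 4) = padovan (n + 2) + padovan (n + 1)"
    using padovan_plus_3 [of "n + 1"] by (simp add: add.commute)
  then show ?thesis
    by (simp add: padovan_plus_3 power2_eq_square algebra_simps)
qed

lemma padovan_square_fps_recurrence:
  "(1 - fps_X ^ 2 - fps_X ^ 3) * padovan_square_fps = 1 + 2 * fps_X ^ 3 * padovan_product_fps"
proof (rule fps_ext)
  fix n
  have rhs: "(1 + 2 * fps_X ^ 3 * padovan_product_fps) $ n
      = (1 :: int fps) $ n + 2 * (if n < 3 then 0 else padovan_product_fps $ (n - 3))"
    by (simp only: fps_add_nth mult_2 distrib_right fps_X_power_mult_nth)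
  show "((1 - fps_X ^ 2 - fps_X ^ 3) * padovan_square_fps) $ n
      = (1 + 2 * fps_X ^ 3 * padovan_product_fps) $ n"
  proof (cases "n < 3")
    case True
    then have "n = 0 \<or> n = 1 \<or> n = 2"
      by auto
    then show ?thesis
      unfolding fps_one_minus_X_powers_mult_nth rhs padovan_square_fps_def
      by (elim disjE) simp_all
  next
    case False
    then obtain m where "n = m + 3"
      by (metis add.commute le_add_diff_inverse not_less)
    then show ?thesis
      unfolding fps_one_minus_X_powers_mult_nth rhs
      unfolding padovan_square_fps_def padovan_product_fps_def
      using padovan_square_plus_3 [of m] by simp
  qed
qed

lemma padovan_product_fps_recurrence:
  "(1 - fps_X ^ 1 - fps_X ^ 3) * padovan_product_fps = fps_X ^ 2 * padovan_square_fps"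
proof (rule fps_ext)
  fix n
  show "((1 - fps_X ^ 1 - fps_X ^ 3) * padovan_product_fps) $ n
      = (fps_X ^ 2 * padovan_square_fps) $ n"
  proof (cases "n < 3")
    case True
    then have "n = 0 \<or> n = 1 \<or> n = 2"
      by auto
    then show ?thesis
      unfolding fps_one_minus_X_powers_mult_nth fps_X_power_mult_nth
        padovan_square_fps_def padovan_product_fps_def
      by (elim disjE) simp_all
  next
    case False
    then obtain m where "n = m + 3"
      by (metis add.commute le_add_diff_inverse not_less)
    then show ?thesis
      unfolding fps_one_minus_X_powers_mult_nth fps_X_power_mult_nth
        padovan_square_fps_def padovan_product_fps_def
      using padovan_product_plus_3 [of m] by (simp add: numeral_eq_Suc)
  qed
qed

lemma padovan_square_fps_eq:
  "padovan_square_fps = padovan_fps + 2 * fps_X ^ 5 * (padovan_fps * (narayana_fps * padovan_square_fps))"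
proof -
  let ?A = "1 - fps_X ^ 1 - fps_X ^ 3 :: int fps"
  and ?B = "1 - fps_X ^ 2 - fps_X ^ 3 :: int fps"
  let ?P = padovan_fps and ?C = narayana_fps and ?Q = padovan_square_fps
  have product_eliminated: "?A * (?B * ?Q - 1) = 2 * fps_X ^ 5 * ?Q"
  proof -
    have "?A * (?B * ?Q - 1) = 2 * fps_X ^ 3 * (?A * padovan_product_fps)"
      unfolding padovan_square_fps_recurrence by (simp add: algebra_simps)
    also have "\<dots> = 2 * fps_X ^ 5 * ?Q"
      unfolding padovan_product_fps_recurrence by (simp add: power_add [symmetric] algebra_simps)
    finally show ?thesis .
  qed
  have "?Q - ?P = (?A * ?C) * (?B * ?P) * ?Q - (?A * ?C) * ?P"
    unfolding padovan_fps_inverse narayana_fps_inverse by simp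
  also have "\<dots> = ?C * ?P * (?A * (?B * ?Q - 1))"
    by (simp add: algebra_simps)
  also have "\<dots> = 2 * fps_X ^ 5 * (?P * (?C * ?Q))"
    unfolding product_eliminated by (simp add: algebra_simps)
  finally show ?thesis
    by (simp add: algebra_simps)
qed

lemma padovan_square_convolution:
  "padovan (n + 5) ^ 2 = padovan (n + 5)
     + 2 * (\<Sum>i = 0..n. padovan i * (\<Sum>j = 0..n - i. narayana j * padovan (n - i - j) ^ 2))"
proof -
  have "padovan_square_fps $ (n + 5)
      = padovan_fps $ (n + 5) + 2 * (padovan_fps * (narayana_fps * padovan_square_fps)) $ n"
    by (subst padovan_square_fps_eq)
      (simp only: fps_add_nth mult_2 distrib_right mult.assoc fps_X_power_mult_nth, simp)
  then show ?thesis
    by (simp add: fps_mult_nth padovan_square_fps_def padovan_fps_def narayana_fps_def)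
qed

lemma sum_int_interval_from:
  "(\<Sum>x = a..a + int m. f x) = (\<Sum>j = 0..m. f (a + int j))"
  by (rule sum.reindex_bij_witness [of _ "\<lambda>j. a + int j" "\<lambda>x. nat (x - a)"]) auto

lemma pad_convolution_eq_padovan_convolution:
  "(\<Sum>k = 0..int M. \<Sum>r = 5..int (M + 5) - k. cow (r - 5) * pad k * pad (int (M + 5) - k - r) ^ 2)
     = (\<Sum>i = 0..M. padovan i * (\<Sum>j = 0..M - i. narayana j * padovan (M - i - j) ^ 2))"
proof -
  have inner: "(\<Sum>r = 5..int (M + 5) - int i. cow (r - 5) * pad (int i) * pad (int (M + 5) - int i - r) ^ 2)
      = padovan i * (\<Sum>j = 0..M - i. narayana j * padovan (M - i - j) ^ 2)" if "i \<le> M" for i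
  proof -
    have bound: "int (M + 5) - int i = 5 + int (M - i)"
      using that by simp
    have "(\<Sum>r = 5..int (M + 5) - int i. cow (r - 5) * pad (int i) * pad (int (M + 5) - int i - r) ^ 2)
        = (\<Sum>j = 0..M - i. cow (int j) * pad (int i) * pad (int (M - i) - int j) ^ 2)"
      unfolding bound sum_int_interval_from by simp
    also have "\<dots> = padovan i * (\<Sum>j = 0..M - i. narayana j * padovan (M - i - j) ^ 2)"
      by (simp add: sum_distrib_left algebra_simps flip: of_nat_diff)
    finally show ?thesis .
  qed
  have "(\<Sum>k = 0..int M. \<Sum>r = 5..int (M + 5) - k. cow (r - 5) * pad k * pad (int (M + 5) - k - r) ^ 2)
      = (\<Sum>i = 0..M. \<Sum>r = 5..int (M + 5) - int i. cow (r - 5) * pad (int i) * pad (int (M + 5) - int i - r) ^ 2)"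
    using sum_int_interval_from [where a = 0 and m = M] by (simp only: add_0)
  also have "\<dots> = (\<Sum>i = 0..M. padovan i * (\<Sum>j = 0..M - i. narayana j * padovan (M - i - j) ^ 2))"
    by (intro sum.cong refl) (simp only: inner atLeastAtMost_iff)
  finally show ?thesis .
qed

theorem mainTheorem17:
  fixes n :: int
  assumes "n \<ge> 0"
  shows "(pad n)^2 = pad n + 2 * (\<Sum>k = 0..n - 5. \<Sum>r = 5..n - k.
            cow (r - 5) * pad k * (pad (n - k - r))^2)"
proof -
  obtain N where N: "n = int N"
    using assms by (metis nonneg_eq_int)
  show ?thesis
  proof (cases "N < 5")
    case True
    then show ?thesis
      by (simp add: N padovan_square_small)
  next
    case False
    then obtain M where M: "n = int (M + 5)"
      by (metis N add.commute le_add_diff_inverse not_less)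
    then have "n - 5 = int M"
      by simp
    then show ?thesis
      using padovan_square_convolution [of M] pad_convolution_eq_padovan_convolution [of M]
      by (simp only: M pad_int)
  qed
qed

end
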